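(* Let $q,n,d,m$ be positive integers with $q\ge 2$ such that $d=m\bigl(qd-(q-1)(n-1)\bigr)$ and such that $n-d$ does not divide $m(n-1)$. If $r\in\{1,\dots,q-1\}$ satisfies $$n(n-1-d)(r-1)r<(q-r+1)\bigl(qm(q+r-2)-2r\bigr),$$ then $A_q(n,d)<q^2m-r$.
   Context: For an integer $q\ge2$ let $[q]=\{0,1,\dots,q-1\}$. For words $u,v\in[q]^n$, the Hamming distance $d_H(u,v)$ is the number of coordinates $i$ with $u_i\neq v_i$. The minimum distance $d_{\min}(C)$ of a code $C\subseteq[q]^n$ is the minimum of $d_H(u,v)$ over distinct $u,v\in C$ (and $\infty$ if $|C|\le1$). $A_q(n,d)$ denotes the maximum cardinality of a code $C\subseteq[q]^n$ with $d_{\min}(C)\ge d$. *)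

theory Defs
  imports Main "HOL-Library.FuncSet"
begin

definition words :: "nat \<Rightarrow> nat \<Rightarrow> (nat \<Rightarrow> nat) set" where
  "words q n = PiE {..<n} (\<lambda>_. {..<q})"

definition hamming :: "nat \<Rightarrow> (nat \<Rightarrow> nat) \<Rightarrow> (nat \<Rightarrow> nat) \<Rightarrow> nat" where
  "hamming n u v = card {i \<in> {..<n}. u i \<noteq> v i}"

text \<open>C has minimum distance at least d (vacuous if |C| \<le> 1, matching d_min = \<infinity>).\<close>
definition min_dist_ge :: "nat \<Rightarrow> (nat \<Rightarrow> nat) set \<Rightarrow> nat \<Rightarrow> bool" where
  "min_dist_ge n C d \<longleftrightarrow> (\<forall>u\<in>C. \<forall>v\<in>C. u \<noteq> v \<longrightarrow> d \<le> hamming n u v)"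

definition A_q :: "nat \<Rightarrow> nat \<Rightarrow> nat \<Rightarrow> nat" where
  "A_q q n d = Max {card C | C. C \<subseteq> words q n \<and> min_dist_ge n C d}"

end

theory Submission
  imports Defs
begin

text \<open>
  Suppose a code \<open>C\<close> with \<open>q\<^sup>2 m - r\<close> words and minimum distance \<open>d\<close> exists.
  Plotkin's averaging argument, applied to the words of \<open>C\<close> carrying a fixed symbol at
  coordinate \<open>i\<close>, shows that every symbol occurs at most \<open>q m\<close> times in every coordinate,
  and that a symbol occurring exactly \<open>q m\<close> times (a full symbol) makes every other
  coordinate of those words uniformly distributed.

  Distinct codewords agree in at most \<open>t = n - d\<close> places; call a pair bad if its
  agreement lies strictly between \<open>0\<close> and \<open>t\<close>. Evaluating the sum of \<open>a (t - a)\<close> over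
  all pairs (\<open>a\<close> the agreement) through the coincidence counts of single coordinates and
  of pairs of coordinates, together with the Plotkin equality
  \<open>d = m (q d - (q - 1) (n - 1))\<close>, bounds the number of bad pairs by
  \<open>\<Sum>i. E i - r \<le> n r (r - 1)\<close>, where \<open>E i\<close> is the sum of the squared deficits
  \<open>q m - frequency\<close> in coordinate \<open>i\<close>. Conversely, since \<open>t\<close> does not divide
  \<open>m (n - 1)\<close>, every word avoiding a full symbol \<open>a\<close> at coordinate \<open>i\<close> has a bad partner
  among the \<open>q m\<close> words carrying \<open>a\<close> there; counting these partners yields more bad
  pairs than allowed by the hypothesis on \<open>r\<close>.
\<close>

lemma card_filter_eq_sum_of_bool:
  "finite A \<Longrightarrow> (of_nat (card {x\<in>A. P x}) :: 'a::comm_semiring_1) = (\<Sum>x\<in>A. of_bool (P x))"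
  by (simp add: Collect_conj_eq Int_commute)

lemma sum_card_fibers:
  assumes "finite C" "finite K" "key ` C \<subseteq> K"
  shows "(\<Sum>k\<in>K. int (card {u\<in>C. key u = k})) = int (card C)"
  using sum.group[OF assms, of "\<lambda>_. 1::int"] by simp

lemma sum_sum_of_bool_eq_sum_card_fibers_sq:
  assumes "finite C" "finite K" "key ` C \<subseteq> K"
  shows "(\<Sum>u\<in>C. \<Sum>v\<in>C. of_bool (key u = key v)) = (\<Sum>k\<in>K. int (card {u\<in>C. key u = k}) ^ 2)"
proof -
  define c where "c k = int (card {u\<in>C. key u = k})" for k
  have "(\<Sum>v\<in>C. of_bool (key u = key v)) = c (key u)" for u
    unfolding c_def using card_filter_eq_sum_of_bool[OF assms(1), of "\<lambda>v. key v = key u"]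
    by (simp add: eq_commute)
  then have "(\<Sum>u\<in>C. \<Sum>v\<in>C. of_bool (key u = key v)) = (\<Sum>u\<in>C. c (key u))"
    by simp
  also have "\<dots> = (\<Sum>k\<in>K. \<Sum>u\<in>{u\<in>C. key u = k}. c (key u))"
    by (rule sum.group[OF assms, symmetric])
  also have "\<dots> = (\<Sum>k\<in>K. \<Sum>u\<in>{u\<in>C. key u = k}. c k)"
    by (intro sum.cong refl) auto
  also have "\<dots> = (\<Sum>k\<in>K. c k ^ 2)"
    by (simp add: c_def power2_eq_square del: of_nat_sum)
  finally show ?thesis unfolding c_def .
qed

lemma sum_power2_ge_affine:
  fixes c :: "'k \<Rightarrow> int"
  assumes "finite K"
  shows "(\<Sum>k\<in>K. c k ^ 2) \<ge> (2 * a - 1) * (\<Sum>k\<in>K. c k) - int (card K) * (a * (a - 1))"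
proof -
  have "c k ^ 2 \<ge> (2 * a - 1) * c k - a * (a - 1)" for k
  proof -
    \<comment> \<open>no integer lies strictly between \<open>a - 1\<close> and \<open>a\<close>\<close>
    have "(c k - a) * (c k - a + 1) \<ge> 0"
      by (cases "c k \<ge> a") (auto intro: mult_nonneg_nonneg mult_nonpos_nonpos)
    then show ?thesis by (simp add: algebra_simps power2_eq_square)
  qed
  then have "(\<Sum>k\<in>K. c k ^ 2) \<ge> (\<Sum>k\<in>K. (2 * a - 1) * c k - a * (a - 1))"
    by (intro sum_mono) auto
  then show ?thesis by (simp add: sum_subtractf sum_distrib_left)
qed

lemma sum_power2_deviation:
  fixes c :: "'k \<Rightarrow> int"
  assumes "finite K" "(\<Sum>k\<in>K. c k) = N"
  shows "(\<Sum>k\<in>K. (int (card K) * c k - N) ^ 2) = int (card K) * (int (card K) * (\<Sum>k\<in>K. c k ^ 2) - N ^ 2)"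
proof -
  have "(\<Sum>k\<in>K. (int (card K) * c k - N) ^ 2)
      = (\<Sum>k\<in>K. int (card K) ^ 2 * c k ^ 2 - 2 * int (card K) * N * c k + N ^ 2)"
    by (intro sum.cong refl) (simp add: power2_eq_square algebra_simps)
  also have "\<dots> = int (card K) ^ 2 * (\<Sum>k\<in>K. c k ^ 2) - 2 * int (card K) * N * N + int (card K) * N ^ 2"
    using assms by (simp add: sum.distrib sum_subtractf sum_distrib_left[symmetric])
  finally show ?thesis by (simp add: power2_eq_square algebra_simps)
qed

lemma words_less: "u \<in> words q n \<Longrightarrow> i < n \<Longrightarrow> u i < q"
  unfolding words_def by auto

lemma finite_words: "finite (words q n)"
  unfolding words_def by (rule finite_PiE) auto

lemma finite_code: "C \<subseteq> words q n \<Longrightarrow> finite C"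
  using finite_words finite_subset by blast

lemma min_dist_ge_subset: "min_dist_ge n C d \<Longrightarrow> D \<subseteq> C \<Longrightarrow> min_dist_ge n D d"
  unfolding min_dist_ge_def by blast

lemma A_q_attained: "\<exists>C. C \<subseteq> words q n \<and> min_dist_ge n C d \<and> card C = A_q q n d"
proof -
  let ?S = "{card C | C. C \<subseteq> words q n \<and> min_dist_ge n C d}"
  have "?S \<subseteq> {..card (words q n)}"
    using card_mono[OF finite_words] by auto
  then have "finite ?S"
    by (rule finite_subset) simp
  moreover have "card {} \<in> ?S"
    by (intro CollectI exI[of _ "{}"]) (simp add: min_dist_ge_def)
  ultimately have "Max ?S \<in> ?S"
    by (intro Max_in) auto
  then show ?thesis
    unfolding A_q_def by auto
qed

section \<open>Agreement and coincidence counts\<close>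

definition agreement :: "nat \<Rightarrow> (nat \<Rightarrow> nat) \<Rightarrow> (nat \<Rightarrow> nat) \<Rightarrow> nat" where
  "agreement n u v = card {i \<in> {..<n}. u i = v i}"

lemma agreement_eq_sum: "int (agreement n u v) = (\<Sum>i<n. of_bool (u i = v i))"
  unfolding agreement_def by (rule card_filter_eq_sum_of_bool) simp

lemma agreement_commute: "agreement n u v = agreement n v u"
  unfolding agreement_def by (simp add: eq_commute)

lemma agreement_self: "agreement n u u = n"
  unfolding agreement_def by simp

lemma hamming_eq_length_minus_agreement: "int (hamming n u v) = int n - int (agreement n u v)"
proof -
  have "int (hamming n u v) = (\<Sum>i<n. of_bool (u i \<noteq> v i))"
    unfolding hamming_def by (rule card_filter_eq_sum_of_bool) simp
  also have "\<dots> = (\<Sum>i<n. 1 - of_bool (u i = v i))"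
    by (intro sum.cong refl) simp
  finally show ?thesis by (simp add: sum_subtractf agreement_eq_sum)
qed

definition coincidences :: "(nat \<Rightarrow> nat) set \<Rightarrow> nat \<Rightarrow> nat \<Rightarrow> int" where
  "coincidences C i j = (\<Sum>u\<in>C. \<Sum>v\<in>C. of_bool (u i = v i \<and> u j = v j))"

lemma sum_sum_agreement: "(\<Sum>u\<in>C. \<Sum>v\<in>C. int (agreement n u v)) = (\<Sum>i<n. coincidences C i i)"
proof -
  have "(\<Sum>u\<in>C. \<Sum>v\<in>C. int (agreement n u v)) = (\<Sum>u\<in>C. \<Sum>v\<in>C. \<Sum>i<n. of_bool (u i = v i))"
    by (simp only: agreement_eq_sum)
  also have "\<dots> = (\<Sum>u\<in>C. \<Sum>i<n. \<Sum>v\<in>C. of_bool (u i = v i))"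
    by (intro sum.cong refl sum.swap)
  also have "\<dots> = (\<Sum>i<n. \<Sum>u\<in>C. \<Sum>v\<in>C. of_bool (u i = v i))"
    by (rule sum.swap)
  finally show ?thesis by (simp add: coincidences_def)
qed

lemma sum_sum_agreement_sq:
  "(\<Sum>u\<in>C. \<Sum>v\<in>C. int (agreement n u v) ^ 2) = (\<Sum>i<n. \<Sum>j<n. coincidences C i j)"
proof -
  have "int (agreement n u v) ^ 2 = (\<Sum>i<n. \<Sum>j<n. of_bool (u i = v i \<and> u j = v j))" for u v
    unfolding agreement_eq_sum power2_eq_square sum_product of_bool_conj ..
  then have "(\<Sum>u\<in>C. \<Sum>v\<in>C. int (agreement n u v) ^ 2)
      = (\<Sum>u\<in>C. \<Sum>v\<in>C. \<Sum>i<n. \<Sum>j<n. of_bool (u i = v i \<and> u j = v j))"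
    by simp
  also have "\<dots> = (\<Sum>u\<in>C. \<Sum>i<n. \<Sum>v\<in>C. \<Sum>j<n. of_bool (u i = v i \<and> u j = v j))"
    by (intro sum.cong refl sum.swap)
  also have "\<dots> = (\<Sum>i<n. \<Sum>u\<in>C. \<Sum>v\<in>C. \<Sum>j<n. of_bool (u i = v i \<and> u j = v j))"
    by (rule sum.swap)
  also have "\<dots> = (\<Sum>i<n. \<Sum>j<n. \<Sum>u\<in>C. \<Sum>v\<in>C. of_bool (u i = v i \<and> u j = v j))"
    by (intro sum.cong refl trans[OF _ sum.swap] sum.swap)
  finally show ?thesis by (simp add: coincidences_def)
qed

lemma sum_sum_agreement_gap:
  "(\<Sum>u\<in>C. \<Sum>v\<in>C. int (agreement n u v) * (t - int (agreement n u v)))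
     = t * (\<Sum>i<n. coincidences C i i) - (\<Sum>i<n. \<Sum>j<n. coincidences C i j)"
proof -
  have "(\<Sum>u\<in>C. \<Sum>v\<in>C. int (agreement n u v) * (t - int (agreement n u v)))
      = t * (\<Sum>u\<in>C. \<Sum>v\<in>C. int (agreement n u v)) - (\<Sum>u\<in>C. \<Sum>v\<in>C. int (agreement n u v) ^ 2)"
    by (simp add: sum_subtractf sum_distrib_left power2_eq_square algebra_simps)
  then show ?thesis by (simp add: sum_sum_agreement sum_sum_agreement_sq)
qed

lemma coincidences_eq_sum_card_sq:
  assumes "C \<subseteq> words q n" "i < n" "j < n"
  shows "coincidences C i j = (\<Sum>k\<in>{..<q} \<times> {..<q}. int (card {u\<in>C. (u i, u j) = k}) ^ 2)"
  unfolding coincidences_def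
  using sum_sum_of_bool_eq_sum_card_fibers_sq[OF finite_code[OF assms(1)], of "{..<q} \<times> {..<q}"]
    assms words_less by fastforce

lemma coincidences_diag_eq_sum_card_sq:
  assumes "C \<subseteq> words q n" "i < n"
  shows "coincidences C i i = (\<Sum>b<q. int (card {u\<in>C. u i = b}) ^ 2)"
  unfolding coincidences_def
  using sum_sum_of_bool_eq_sum_card_fibers_sq[OF finite_code[OF assms(1)], of "{..<q}"]
    assms words_less by fastforce

lemma column_deviation:
  assumes "C \<subseteq> words q n" "j < n"
  shows "(\<Sum>b<q. (int q * int (card {u\<in>C. u j = b}) - int (card C)) ^ 2)
           = int q * (int q * coincidences C j j - int (card C) ^ 2)"
proof -
  have "(\<Sum>b<q. int (card {u\<in>C. u j = b})) = int (card C)"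
    by (rule sum_card_fibers[OF finite_code[OF assms(1)]]) (use assms words_less in auto)
  from sum_power2_deviation[OF _ this] show ?thesis
    using coincidences_diag_eq_sum_card_sq[OF assms] by simp
qed

section \<open>Plotkin's bound for a fixed coordinate\<close>

lemma sum_sum_hamming_ge:
  assumes "finite C" "min_dist_ge n C d"
  shows "int (card C) * (int (card C) - 1) * int d \<le> (\<Sum>u\<in>C. \<Sum>v\<in>C. int (hamming n u v))"
proof -
  have "(int (card C) - 1) * int d \<le> (\<Sum>v\<in>C. int (hamming n u v))" if "u \<in> C" for u
  proof -
    have "(int (card C) - 1) * int d = (\<Sum>v\<in>C - {u}. int d)"
    proof -
      have "card C \<ge> 1"
        using that assms(1) by (metis One_nat_def Suc_leI card_gt_0_iff empty_iff)
      then show ?thesis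
        using that assms(1) by (simp add: card_Diff_singleton of_nat_diff)
    qed
    also have "\<dots> \<le> (\<Sum>v\<in>C - {u}. int (hamming n u v))"
      using assms(2) that unfolding min_dist_ge_def by (intro sum_mono) auto
    also have "\<dots> = (\<Sum>v\<in>C. int (hamming n u v))"
      using sum.remove[OF assms(1) that, of "\<lambda>v. int (hamming n u v)"] by (simp add: hamming_def)
    finally show ?thesis .
  qed
  then have "(\<Sum>u\<in>C. (int (card C) - 1) * int d) \<le> (\<Sum>u\<in>C. \<Sum>v\<in>C. int (hamming n u v))"
    by (intro sum_mono) auto
  then show ?thesis by (simp add: algebra_simps)
qed

lemma sum_sum_hamming_eq:
  assumes "finite C"
  shows "(\<Sum>u\<in>C. \<Sum>v\<in>C. int (hamming n u v)) = int n * int (card C) ^ 2 - (\<Sum>j<n. coincidences C j j)"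
proof -
  have "(\<Sum>u\<in>C. \<Sum>v\<in>C. int (hamming n u v)) = (\<Sum>u\<in>C. \<Sum>v\<in>C. int n - int (agreement n u v))"
    by (simp add: hamming_eq_length_minus_agreement)
  also have "\<dots> = int n * int (card C) ^ 2 - (\<Sum>u\<in>C. \<Sum>v\<in>C. int (agreement n u v))"
    by (simp add: sum_subtractf power2_eq_square algebra_simps)
  finally show ?thesis by (simp add: sum_sum_agreement)
qed

lemma plotkin_with_defect:
  assumes "C \<subseteq> words q n" "min_dist_ge n C d"
  shows "int q * int (card C) * (int (card C) - 1) * int d
           + (\<Sum>j<n. int q * coincidences C j j - int (card C) ^ 2)
         \<le> int n * (int q - 1) * int (card C) ^ 2"
proof -
  have "int (card C) * (int (card C) - 1) * int d \<le> int n * int (card C) ^ 2 - (\<Sum>j<n. coincidences C j j)"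
    using sum_sum_hamming_ge[OF finite_code[OF assms(1)] assms(2)]
      sum_sum_hamming_eq[OF finite_code[OF assms(1)]] by simp
  then have "int q * (int (card C) * (int (card C) - 1) * int d)
      \<le> int q * (int n * int (card C) ^ 2 - (\<Sum>j<n. coincidences C j j))"
    by (rule mult_left_mono) simp
  then show ?thesis by (simp add: sum_subtractf sum_distrib_left algebra_simps)
qed

lemma column_defect_nonneg:
  assumes "0 < q" "C \<subseteq> words q n" "j < n"
  shows "0 \<le> int q * coincidences C j j - int (card C) ^ 2"
proof -
  have "0 \<le> int q * (int q * coincidences C j j - int (card C) ^ 2)"
    unfolding column_deviation[OF assms(2,3), symmetric] by (intro sum_nonneg) simp
  then show ?thesis using assms(1) by (simp add: zero_le_mult_iff)
qed

lemma plotkin_fixed_column_defect: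
  assumes "C \<subseteq> words q n" "min_dist_ge n C d" "i < n" "\<forall>u\<in>C. u i = a"
  shows "int q * int (card C) * (int (card C) - 1) * int d
           + (\<Sum>j\<in>{..<n} - {i}. int q * coincidences C j j - int (card C) ^ 2)
         \<le> (int n - 1) * (int q - 1) * int (card C) ^ 2"
proof -
  have "coincidences C i i = (\<Sum>u\<in>C. \<Sum>v\<in>C. 1)"
    unfolding coincidences_def by (intro sum.cong refl) (simp add: assms(4))
  then have "coincidences C i i = int (card C) ^ 2"
    by (simp add: power2_eq_square)
  then have "(\<Sum>j<n. int q * coincidences C j j - int (card C) ^ 2)
      = (int q - 1) * int (card C) ^ 2 + (\<Sum>j\<in>{..<n} - {i}. int q * coincidences C j j - int (card C) ^ 2)"
    using assms(3) by (simp add: sum.remove algebra_simps)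
  then show ?thesis
    using plotkin_with_defect[OF assms(1,2)] by (simp add: algebra_simps)
qed

lemma plotkin_fixed_column_bound:
  assumes "0 < q" "C \<subseteq> words q n" "min_dist_ge n C d" "i < n" "\<forall>u\<in>C. u i = a"
  shows "int (card C) * (int q * int d - (int q - 1) * (int n - 1)) \<le> int q * int d"
proof (cases "C = {}")
  case False
  then have N_pos: "int (card C) > 0"
    using finite_code[OF assms(2)] by (simp add: card_gt_0_iff)
  have "0 \<le> (\<Sum>j\<in>{..<n} - {i}. int q * coincidences C j j - int (card C) ^ 2)"
    using column_defect_nonneg[OF assms(1,2)] by (intro sum_nonneg) auto
  then have "int (card C) * (int q * (int (card C) - 1) * int d)
      \<le> int (card C) * ((int n - 1) * (int q - 1) * int (card C))"
    using plotkin_fixed_column_defect[OF assms(2-5)] by (simp add: power2_eq_square algebra_simps)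
  then have "int q * (int (card C) - 1) * int d \<le> (int n - 1) * (int q - 1) * int (card C)"
    using N_pos by simp
  then show ?thesis by (simp add: algebra_simps)
qed simp

lemma plotkin_fixed_column_balanced:
  assumes "0 < q" "C \<subseteq> words q n" "min_dist_ge n C d" "i < n" "\<forall>u\<in>C. u i = a"
    and eq: "int (card C) * (int q * int d - (int q - 1) * (int n - 1)) = int q * int d"
    and "j < n" "j \<noteq> i" "b < q"
  shows "int q * int (card {u\<in>C. u j = b}) = int (card C)"
proof -
  define defect where "defect j = int q * coincidences C j j - int (card C) ^ 2" for j
  have nonneg: "\<forall>j\<in>{..<n} - {i}. 0 \<le> defect j"
    unfolding defect_def using column_defect_nonneg[OF assms(1,2)] by auto
  have "int (card C) * (int (card C) * (int q * int d - (int q - 1) * (int n - 1)))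
      = int (card C) * (int q * int d)"
    by (simp only: eq)
  then have "int q * int (card C) * (int (card C) - 1) * int d = (int n - 1) * (int q - 1) * int (card C) ^ 2"
    by (simp add: power2_eq_square algebra_simps)
  then have "(\<Sum>j\<in>{..<n} - {i}. defect j) \<le> 0"
    using plotkin_fixed_column_defect[OF assms(2-5)] unfolding defect_def by simp
  then have "(\<Sum>j\<in>{..<n} - {i}. defect j) = 0"
    using nonneg by (intro order_antisym sum_nonneg) auto
  then have "defect j = 0"
    using sum_nonneg_eq_0_iff[of "{..<n} - {i}" defect] nonneg assms(7,8) by auto
  then have "(\<Sum>b<q. (int q * int (card {u\<in>C. u j = b}) - int (card C)) ^ 2) = 0"
    unfolding column_deviation[OF assms(2,7)] defect_def by simp
  then show ?thesis
    using sum_nonneg_eq_0_iff[of "{..<q}" "\<lambda>b. (int q * int (card {u\<in>C. u j = b}) - int (card C)) ^ 2"]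
      assms(9) by simp
qed

section \<open>A code with \<open>q\<^sup>2 m - r\<close> words\<close>

locale large_code =
  fixes q n d m r :: nat and C :: "(nat \<Rightarrow> nat) set"
  assumes q_ge_2: "q \<ge> 2" and n_pos: "n > 0" and d_pos: "d > 0" and m_pos: "m > 0"
    and plotkin_eq: "int d = int m * (int q * int d - (int q - 1) * (int n - 1))"
    and not_dvd: "\<not> (int n - int d) dvd (int m * (int n - 1))"
    and r_ge_1: "1 \<le> r" and r_le: "r \<le> q - 1"
    and code: "C \<subseteq> words q n" and dist: "min_dist_ge n C d"
    and card_code: "int (card C) = int q ^ 2 * int m - int r"

begin

lemma finite_C: "finite C"
  using finite_code[OF code] .

lemma plotkin_gap_pos: "0 < int q * int d - (int q - 1) * (int n - 1)"
proof -
  have "0 < int m * (int q * int d - (int q - 1) * (int n - 1))"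
    using plotkin_eq d_pos by simp
  then show ?thesis
    using m_pos by (simp add: zero_less_mult_iff)
qed

lemma r_less_q: "int r + 1 \<le> int q"
  using r_le q_ge_2 by linarith

lemma q_le_qm: "int q \<le> int q * int m"
  using m_pos by (simp add: mult_le_cancel_left1)

lemma plotkin_eq_alt: "(int q * int m - 1) * int d = int m * (int q - 1) * (int n - 1)"
  using plotkin_eq by (simp add: algebra_simps)

definition t :: int where "t = int n - int d"

lemma d_less_n: "d < n"
proof (rule ccontr)
  assume "\<not> d < n"
  then have "(int q - 1) * 1 \<le> (int q - 1) * (int d - int n + 1)"
    using q_ge_2 by (intro mult_left_mono) auto
  then have "int d + 1 \<le> int q * int d - (int q - 1) * (int n - 1)"
    using q_ge_2 by (simp add: algebra_simps)
  also have "\<dots> \<le> int m * (int q * int d - (int q - 1) * (int n - 1))"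
    using m_pos plotkin_gap_pos by simp
  finally show False
    using plotkin_eq by simp
qed

lemma t_ge_2: "t \<ge> 2"
proof -
  have "t \<noteq> 1"
    using not_dvd unfolding t_def by auto
  then show ?thesis
    using d_less_n unfolding t_def by simp
qed

lemma agreement_le_t: "u \<in> C \<Longrightarrow> v \<in> C \<Longrightarrow> u \<noteq> v \<Longrightarrow> int (agreement n u v) \<le> t"
  using dist hamming_eq_length_minus_agreement[of n u v] unfolding min_dist_ge_def t_def by force

definition freq :: "nat \<Rightarrow> nat \<Rightarrow> int" where
  "freq i a = int (card {u\<in>C. u i = a})"

definition deficit :: "nat \<Rightarrow> nat \<Rightarrow> int" where
  "deficit i a = int q * int m - freq i a"

definition full_symbols :: "nat \<Rightarrow> nat set" where
  "full_symbols i = {a\<in>{..<q}. deficit i a = 0}"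

lemma full_symbols_freq: "a \<in> full_symbols i \<Longrightarrow> freq i a = int q * int m"
  unfolding full_symbols_def deficit_def by simp

lemma freq_le: "i < n \<Longrightarrow> freq i a \<le> int q * int m"
proof -
  assume i: "i < n"
  let ?X = "int q * int d - (int q - 1) * (int n - 1)"
  have "freq i a * ?X \<le> int q * int d"
    unfolding freq_def using code dist q_ge_2
    by (intro plotkin_fixed_column_bound[OF _ _ _ i, of _ _ _ a]) (auto intro: min_dist_ge_subset)
  also have "\<dots> = (int q * int m) * ?X"
    by (subst plotkin_eq) simp
  finally show ?thesis
    using plotkin_gap_pos by simp
qed

lemma full_column_balanced:
  assumes i: "i < n" and full: "freq i a = int q * int m" and j: "j < n" "j \<noteq> i" and b: "b < q"
  shows "card {u\<in>C. u i = a \<and> u j = b} = m"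
proof -
  let ?D = "{u\<in>C. u i = a}"
  have D: "?D \<subseteq> words q n" "min_dist_ge n ?D d" "\<forall>u\<in>?D. u i = a"
    using code dist by (auto intro: min_dist_ge_subset)
  have "int (card ?D) * (int q * int d - (int q - 1) * (int n - 1)) = int q * int d"
    using full unfolding freq_def by (subst (2) plotkin_eq) simp
  from plotkin_fixed_column_balanced[OF _ D(1,2) i D(3) this j b] q_ge_2 full
  have "int q * int (card {u\<in>?D. u j = b}) = int q * int m"
    unfolding freq_def by simp
  moreover have "{u\<in>?D. u j = b} = {u\<in>C. u i = a \<and> u j = b}"
    by auto
  ultimately show ?thesis
    using q_ge_2 by simp
qed

lemma deficit_nonneg: "i < n \<Longrightarrow> 0 \<le> deficit i a"
  using freq_le unfolding deficit_def by simp

lemma sum_deficit: "i < n \<Longrightarrow> (\<Sum>a<q. deficit i a) = int r"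
proof -
  assume i: "i < n"
  have "(\<Sum>a<q. freq i a) = int (card C)"
    unfolding freq_def by (rule sum_card_fibers[OF finite_C]) (use code words_less i in auto)
  then show ?thesis
    using card_code unfolding deficit_def by (simp add: sum_subtractf power2_eq_square algebra_simps)
qed

definition sq_deficit :: "nat \<Rightarrow> int" where
  "sq_deficit i = (\<Sum>a<q. deficit i a ^ 2)"

lemma sq_deficit_le: "i < n \<Longrightarrow> sq_deficit i \<le> int r ^ 2"
proof -
  assume i: "i < n"
  have "deficit i a ^ 2 \<le> int r * deficit i a" if "a < q" for a
  proof -
    have "deficit i a \<le> (\<Sum>b<q. deficit i b)"
      using that deficit_nonneg[OF i] by (intro member_le_sum) auto
    then show ?thesis
      using sum_deficit[OF i] deficit_nonneg[OF i, of a] by (simp add: power2_eq_square mult_right_mono)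
  qed
  then have "sq_deficit i \<le> (\<Sum>a<q. int r * deficit i a)"
    unfolding sq_deficit_def by (intro sum_mono) auto
  then show ?thesis
    using sum_deficit[OF i] by (simp add: sum_distrib_left[symmetric] power2_eq_square)
qed

lemma coincidences_diag:
  "i < n \<Longrightarrow> coincidences C i i = int q ^ 3 * int m ^ 2 - 2 * int q * int m * int r + sq_deficit i"
proof -
  assume i: "i < n"
  have "coincidences C i i = (\<Sum>a<q. (int q * int m - deficit i a) ^ 2)"
    using coincidences_diag_eq_sum_card_sq[OF code i] unfolding deficit_def freq_def by simp
  also have "\<dots> = (\<Sum>a<q. (int q * int m) ^ 2 - 2 * (int q * int m) * deficit i a + deficit i a ^ 2)"
    by (intro sum.cong refl) (simp add: power2_eq_square algebra_simps)
  also have "\<dots> = int q * (int q * int m) ^ 2 - 2 * (int q * int m) * int r + sq_deficit i"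
    unfolding sq_deficit_def using sum_deficit[OF i]
    by (simp add: sum.distrib sum_subtractf sum_distrib_left[symmetric])
  finally show ?thesis
    by (simp add: power2_eq_square power3_eq_cube algebra_simps)
qed

lemma coincidences_ge:
  assumes "i < n" "j < n"
  shows "int q ^ 2 * int m ^ 2 - (2 * int m - 1) * int r \<le> coincidences C i j"
proof -
  let ?K = "{..<q} \<times> {..<q}"
  define c where "c k = int (card {u\<in>C. (u i, u j) = k})" for k
  have sum_c: "(\<Sum>k\<in>?K. c k) = int (card C)"
    unfolding c_def by (rule sum_card_fibers[OF finite_C]) (use code words_less assms in auto)
  have "int q ^ 2 * int m ^ 2 - (2 * int m - 1) * int r
      = (2 * int m - 1) * int (card C) - int (card ?K) * (int m * (int m - 1))"
    by (simp add: card_code card_cartesian_product power2_eq_square algebra_simps)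
  also have "\<dots> = (2 * int m - 1) * (\<Sum>k\<in>?K. c k) - int (card ?K) * (int m * (int m - 1))"
    by (simp only: sum_c)
  also have "\<dots> \<le> (\<Sum>k\<in>?K. c k ^ 2)"
    by (rule sum_power2_ge_affine) simp
  also have "\<dots> = coincidences C i j"
    unfolding c_def coincidences_eq_sum_card_sq[OF code assms] ..
  finally show ?thesis .
qed

definition bad :: "(nat \<Rightarrow> nat) \<Rightarrow> (nat \<Rightarrow> nat) \<Rightarrow> bool" where
  "bad u v \<longleftrightarrow> u \<noteq> v \<and> 0 < agreement n u v \<and> int (agreement n u v) < t"

definition bad_pairs :: "((nat \<Rightarrow> nat) \<times> (nat \<Rightarrow> nat)) set" where
  "bad_pairs = {p \<in> C \<times> C. bad (fst p) (snd p)}"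

lemma bad_commute: "bad u v \<Longrightarrow> bad v u"
  unfolding bad_def using agreement_commute by metis

lemma card_bad_pairs_eq_sum: "int (card bad_pairs) = (\<Sum>u\<in>C. \<Sum>v\<in>C. of_bool (bad u v))"
proof -
  have "int (card bad_pairs) = (\<Sum>p\<in>C \<times> C. of_bool (bad (fst p) (snd p)))"
    unfolding bad_pairs_def by (rule card_filter_eq_sum_of_bool) (simp add: finite_C)
  then show ?thesis
    by (simp only: sum.cartesian_product split_def)
qed

lemma sum_sum_agreement_gap_ge:
  "(t - 1) * int (card bad_pairs) - int (card C) * int n * int d
     \<le> (\<Sum>u\<in>C. \<Sum>v\<in>C. int (agreement n u v) * (t - int (agreement n u v)))"
proof -
  have "(t - 1) * of_bool (bad u v) - (if u = v then int n * int d else 0)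
      \<le> int (agreement n u v) * (t - int (agreement n u v))" if "u \<in> C" "v \<in> C" for u v
  proof (cases "u = v")
    case True
    then show ?thesis by (simp add: agreement_self bad_def t_def)
  next
    case False
    define a where "a = int (agreement n u v)"
    have "0 \<le> a" "a \<le> t"
      using agreement_le_t[OF that False] unfolding a_def by auto
    moreover have "bad u v \<longleftrightarrow> 0 < a \<and> a < t"
      using False unfolding bad_def a_def by simp
    ultimately consider "bad u v" "1 \<le> a" "a \<le> t - 1" | "\<not> bad u v" "a = 0 \<or> a = t"
      by linarith
    then show ?thesis
    proof cases
      case 1
      then have "0 \<le> (a - 1) * (t - 1 - a)"
        by simp
      then show ?thesis
        using 1 False unfolding a_def[symmetric] by (simp add: algebra_simps)
    next
      case 2
      then show ?thesis
        using False unfolding a_def[symmetric] by auto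
    qed
  qed
  then have "(\<Sum>u\<in>C. \<Sum>v\<in>C. (t - 1) * of_bool (bad u v) - (if u = v then int n * int d else 0))
      \<le> (\<Sum>u\<in>C. \<Sum>v\<in>C. int (agreement n u v) * (t - int (agreement n u v)))"
    by (intro sum_mono) auto
  then show ?thesis
    by (simp add: sum_subtractf sum_distrib_left[symmetric] card_bad_pairs_eq_sum finite_C)
qed

lemma sum_coincidences_ge:
  "(\<Sum>i<n. coincidences C i i) + int n * (int n - 1) * (int q ^ 2 * int m ^ 2 - (2 * int m - 1) * int r)
     \<le> (\<Sum>i<n. \<Sum>j<n. coincidences C i j)"
proof -
  let ?L = "int q ^ 2 * int m ^ 2 - (2 * int m - 1) * int r"
  have "coincidences C i i + (int n - 1) * ?L \<le> (\<Sum>j<n. coincidences C i j)" if i: "i < n" for i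
  proof -
    have "(int n - 1) * ?L = (\<Sum>j\<in>{..<n} - {i}. ?L)"
      using i by (simp add: of_nat_diff)
    also have "\<dots> \<le> (\<Sum>j\<in>{..<n} - {i}. coincidences C i j)"
      using coincidences_ge[OF i] by (intro sum_mono) auto
    finally show ?thesis
      using i by (simp add: sum.remove)
  qed
  then have "(\<Sum>i<n. coincidences C i i + (int n - 1) * ?L) \<le> (\<Sum>i<n. \<Sum>j<n. coincidences C i j)"
    by (intro sum_mono) auto
  then show ?thesis
    by (simp add: sum.distrib)
qed

lemma counting_identity:
  "(t - 1) * (int q ^ 3 * int m ^ 2 - 2 * int q * int m * int r + int r)
     = (int n - 1) * (int q ^ 2 * int m ^ 2 - (2 * int m - 1) * int r) - int d * (int q ^ 2 * int m - int r)"
proof -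
  have "(t - 1) * (int q ^ 3 * int m ^ 2 - 2 * int q * int m * int r + int r)
      - ((int n - 1) * (int q ^ 2 * int m ^ 2 - (2 * int m - 1) * int r) - int d * (int q ^ 2 * int m - int r))
      = (int q ^ 2 * int m - 2 * int r) * (int m * (int q - 1) * (int n - 1) - (int q * int m - 1) * int d)"
    unfolding t_def by (simp add: algebra_simps power2_eq_square power3_eq_cube)
  also have "\<dots> = 0"
    using plotkin_eq_alt by simp
  finally show ?thesis
    by simp
qed

lemma card_bad_pairs_le_sum_excess: "int (card bad_pairs) \<le> (\<Sum>i<n. sq_deficit i - int r)"
proof -
  let ?Y = "int q ^ 3 * int m ^ 2 - 2 * int q * int m * int r + int r"
  have diag: "(\<Sum>i<n. coincidences C i i) = int n * ?Y + (\<Sum>i<n. sq_deficit i - int r)"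
    by (simp add: coincidences_diag sum.distrib sum_subtractf algebra_simps)
  have "(t - 1) * int (card bad_pairs) - int (card C) * int n * int d
      \<le> t * (\<Sum>i<n. coincidences C i i) - (\<Sum>i<n. \<Sum>j<n. coincidences C i j)"
    using sum_sum_agreement_gap_ge sum_sum_agreement_gap by simp
  then have "(t - 1) * int (card bad_pairs)
      \<le> (t - 1) * (\<Sum>i<n. sq_deficit i - int r)
         + int n * ((t - 1) * ?Y - (int n - 1) * (int q ^ 2 * int m ^ 2 - (2 * int m - 1) * int r)
                    + int d * int (card C))"
    using sum_coincidences_ge diag by (simp add: algebra_simps)
  also have "\<dots> = (t - 1) * (\<Sum>i<n. sq_deficit i - int r)"
    by (simp add: counting_identity card_code)
  finally show ?thesis
    using t_ge_2 by simp
qed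

lemma card_bad_pairs_le: "int (card bad_pairs) \<le> int n * (int r * (int r - 1))"
proof -
  have "(\<Sum>i<n. sq_deficit i - int r) \<le> (\<Sum>i<n. int r ^ 2 - int r)"
    using sq_deficit_le by (intro sum_mono) auto
  then show ?thesis
    using card_bad_pairs_le_sum_excess by (simp add: power2_eq_square algebra_simps)
qed

lemma bad_partner_exists:
  assumes i: "i < n" and a: "a \<in> full_symbols i" and u: "u \<in> C" "u i \<noteq> a"
  shows "\<exists>v\<in>C. v i = a \<and> bad u v"
proof (rule ccontr)
  assume no_bad: "\<not> (\<exists>v\<in>C. v i = a \<and> bad u v)"
  define D where "D = {v\<in>C. v i = a}"
  have "int (card {v\<in>D. u j = v j}) = (if j = i then 0 else int m)" if j: "j < n" for j
  proof (cases "j = i")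
    case True
    then have "{v\<in>D. u j = v j} = {}"
      using u(2) unfolding D_def by auto
    then show ?thesis
      using True by (metis card.empty of_nat_0)
  next
    case False
    have "{v\<in>D. u j = v j} = {v\<in>C. v i = a \<and> v j = u j}"
      unfolding D_def by auto
    then show ?thesis
      using full_column_balanced[OF i full_symbols_freq[OF a] j False] words_less[of u q n j] code u j False
      by auto
  qed
  note column = this
  have "(\<Sum>v\<in>D. int (agreement n u v)) = (\<Sum>v\<in>D. \<Sum>j<n. of_bool (u j = v j))"
    by (simp only: agreement_eq_sum)
  also have "\<dots> = (\<Sum>j<n. \<Sum>v\<in>D. of_bool (u j = v j))"
    by (rule sum.swap)
  also have "\<dots> = (\<Sum>j<n. int (card {v\<in>D. u j = v j}))"
    using finite_C unfolding D_def by (intro sum.cong refl card_filter_eq_sum_of_bool[symmetric]) simp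
  also have "\<dots> = (\<Sum>j<n. if j = i then 0 else int m)"
    using column by simp
  also have "\<dots> = int m * (int n - 1)"
    using i by (simp add: sum.If_cases Diff_eq[symmetric] of_nat_diff)
  finally have "(\<Sum>v\<in>D. int (agreement n u v)) = int m * (int n - 1)" .
  moreover have "t dvd (\<Sum>v\<in>D. int (agreement n u v))"
  proof (rule dvd_sum)
    fix v assume "v \<in> D"
    then have v: "v \<in> C" "v i = a" "u \<noteq> v"
      using u(2) unfolding D_def by auto
    then have "int (agreement n u v) = 0 \<or> int (agreement n u v) = t"
      using agreement_le_t[OF u(1) v(1,3)] no_bad unfolding bad_def by force
    then show "t dvd int (agreement n u v)"
      by auto
  qed
  ultimately show False
    using not_dvd unfolding t_def by simp
qed

lemma full_symbols_card:
  assumes i: "i < n"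
  shows "int q - int r \<le> int (card (full_symbols i))"
    and "int (card (full_symbols i)) \<le> int q - 1"
    and "int r < sq_deficit i \<Longrightarrow> int q - int r + 1 \<le> int (card (full_symbols i))"
proof -
  define P where "P = {..<q} - full_symbols i"
  have "full_symbols i \<subseteq> {..<q}"
    unfolding full_symbols_def by auto
  then have "card P = q - card (full_symbols i)" "card (full_symbols i) \<le> q"
    unfolding P_def by (simp_all add: card_Diff_subset finite_subset)
      (metis card_lessThan card_mono finite_lessThan)
  then have card_full: "int (card (full_symbols i)) = int q - int (card P)"
    by simp
  have pos: "0 \<le> deficit i a - 1" if "a \<in> P" for a
    using that deficit_nonneg[OF i, of a] unfolding P_def full_symbols_def by auto
  have sum_P: "(\<Sum>a\<in>P. deficit i a) = int r"
    unfolding sum_deficit[OF i, symmetric] P_def full_symbols_def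
    by (rule sum.mono_neutral_left) auto
  have excess: "(\<Sum>a\<in>P. deficit i a - 1) = int r - int (card P)"
    using sum_P by (simp add: sum_subtractf)
  have "0 \<le> (\<Sum>a\<in>P. deficit i a - 1)"
    using pos by (rule sum_nonneg)
  then show "int q - int r \<le> int (card (full_symbols i))"
    using excess card_full by simp
  have "P \<noteq> {}"
    using sum_P r_ge_1 by auto
  then have "1 \<le> card P"
    unfolding P_def by (simp add: Suc_le_eq card_gt_0_iff)
  then show "int (card (full_symbols i)) \<le> int q - 1"
    using card_full by simp
  assume "int r < sq_deficit i"
  then have "0 < (\<Sum>a<q. deficit i a * (deficit i a - 1))"
    using sum_deficit[OF i] unfolding sq_deficit_def
    by (simp add: power2_eq_square algebra_simps sum_subtractf)
  then obtain a0 where "a0 < q" "0 < deficit i a0 * (deficit i a0 - 1)"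
    by (metis (mono_tags, lifting) lessThan_iff not_le sum_nonpos)
  then have a0: "a0 \<in> P" "2 \<le> deficit i a0"
    using deficit_nonneg[OF i, of a0] unfolding P_def full_symbols_def
    by (auto simp: zero_less_mult_iff)
  have "deficit i a0 - 1 \<le> (\<Sum>a\<in>P. deficit i a - 1)"
  proof (rule member_le_sum[OF a0(1)])
    show "finite P"
      unfolding P_def by simp
  qed (use pos in blast)
  then have "1 \<le> (\<Sum>a\<in>P. deficit i a - 1)"
    using a0 by simp
  then show "int q - int r + 1 \<le> int (card (full_symbols i))"
    using excess card_full by simp
qed

lemma card_off_full_symbol_pairs:
  "int (card {p \<in> C \<times> full_symbols i. fst p i \<noteq> snd p})
     = int (card (full_symbols i)) * (int (card C) - int q * int m)"
proof -
  have "int (card {p \<in> C \<times> full_symbols i. fst p i \<noteq> snd p})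
      = (\<Sum>p\<in>C \<times> full_symbols i. of_bool (fst p i \<noteq> snd p))"
    by (rule card_filter_eq_sum_of_bool) (simp add: finite_C full_symbols_def)
  also have "\<dots> = (\<Sum>u\<in>C. \<Sum>a\<in>full_symbols i. of_bool (u i \<noteq> a))"
    by (simp only: sum.cartesian_product split_def)
  also have "\<dots> = (\<Sum>a\<in>full_symbols i. \<Sum>u\<in>C. of_bool (u i \<noteq> a))"
    by (rule sum.swap)
  also have "\<dots> = (\<Sum>a\<in>full_symbols i. int (card C) - int q * int m)"
  proof (intro sum.cong refl)
    fix a assume "a \<in> full_symbols i"
    have "(\<Sum>u\<in>C. of_bool (u i = a)) = freq i a"
      unfolding freq_def by (rule card_filter_eq_sum_of_bool[symmetric, OF finite_C])
    then have "(\<Sum>u\<in>C. 1 - of_bool (u i = a)) = int (card C) - freq i a"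
      by (simp only: sum_subtractf) simp
    then show "(\<Sum>u\<in>C. of_bool (u i \<noteq> a)) = int (card C) - int q * int m"
      using full_symbols_freq[OF \<open>a \<in> full_symbols i\<close>] by (simp add: of_bool_not_iff)
  qed
  finally show ?thesis
    by simp
qed

lemma card_outside_full_symbols:
  "int (card {u\<in>C. u i \<notin> full_symbols i})
     = int (card C) - int q * int m * int (card (full_symbols i))"
proof -
  let ?F = "full_symbols i"
  let ?C' = "{u\<in>C. u i \<in> ?F}"
  have "int (card ?C') = (\<Sum>a\<in>?F. int (card {u\<in>?C'. u i = a}))"
    by (rule sum_card_fibers[symmetric]) (auto simp: finite_C full_symbols_def)
  also have "\<dots> = (\<Sum>a\<in>?F. int q * int m)"
  proof (intro sum.cong refl)
    fix a assume "a \<in> ?F"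
    then have "{u\<in>?C'. u i = a} = {u\<in>C. u i = a}"
      by auto
    then show "int (card {u\<in>?C'. u i = a}) = int q * int m"
      using full_symbols_freq[OF \<open>a \<in> ?F\<close>] unfolding freq_def by simp
  qed
  finally have "int (card ?C') = int q * int m * int (card ?F)"
    by simp
  moreover have "card {u\<in>C. u i \<notin> ?F} + card ?C' = card C"
    using finite_C by (subst card_Un_disjoint[symmetric]) (auto intro: arg_cong[where f = card])
  ultimately show ?thesis
    by linarith
qed

text \<open>
  A pair \<open>(u, a)\<close> with \<open>a\<close> full at \<open>i\<close> and \<open>u i \<noteq> a\<close> yields the bad pair
  \<open>(u, w u a)\<close>, whose second word carries a full symbol at \<open>i\<close>; if \<open>u i\<close> is not full
  either, the reversed pair \<open>(w u a, u)\<close> is a further bad pair, whose second word does not.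
\<close>

lemma card_bad_pairs_ge:
  assumes i: "i < n"
  shows "int (card (full_symbols i)) * (2 * int (card C) - int q * int m - int q * int m * int (card (full_symbols i)))
           \<le> int (card bad_pairs)"
proof -
  let ?F = "full_symbols i"
  define w where "w u a = (SOME v. v \<in> C \<and> v i = a \<and> bad u v)" for u a
  have w: "w u a \<in> C \<and> w u a i = a \<and> bad u (w u a)" if "a \<in> ?F" "u \<in> C" "u i \<noteq> a" for u a
    unfolding w_def
    by (rule someI_ex[where P = "\<lambda>v. v \<in> C \<and> v i = a \<and> bad u v"]) (use bad_partner_exists[OF i that] in blast)
  define B1 where "B1 = {p \<in> bad_pairs. snd p i \<in> ?F}"
  define B2 where "B2 = {p \<in> bad_pairs. snd p i \<notin> ?F}"
  have fin_bad: "finite bad_pairs"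
    unfolding bad_pairs_def using finite_C by simp
  have "card {p \<in> C \<times> ?F. fst p i \<noteq> snd p} \<le> card B1"
  proof (rule card_inj_on_le)
    show "inj_on (\<lambda>(u, a). (u, w u a)) {p \<in> C \<times> ?F. fst p i \<noteq> snd p}"
      by (rule inj_on_inverseI[where g = "\<lambda>(u, v). (u, v i)"]) (auto dest: w)
    show "(\<lambda>(u, a). (u, w u a)) ` {p \<in> C \<times> ?F. fst p i \<noteq> snd p} \<subseteq> B1"
      using w unfolding B1_def bad_pairs_def by auto
  qed (simp add: B1_def fin_bad)
  moreover have "card ({u\<in>C. u i \<notin> ?F} \<times> ?F) \<le> card B2"
  proof (rule card_inj_on_le)
    show "inj_on (\<lambda>(u, a). (w u a, u)) ({u\<in>C. u i \<notin> ?F} \<times> ?F)"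
      by (rule inj_on_inverseI[where g = "\<lambda>(v, u). (u, v i)"]) (auto dest: w)
    show "(\<lambda>(u, a). (w u a, u)) ` ({u\<in>C. u i \<notin> ?F} \<times> ?F) \<subseteq> B2"
      using w bad_commute unfolding B2_def bad_pairs_def by fastforce
  qed (simp add: B2_def fin_bad)
  moreover have "card B1 + card B2 = card bad_pairs"
    using fin_bad unfolding B1_def B2_def
    by (subst card_Un_disjoint[symmetric]) (auto intro: arg_cong[where f = card])
  ultimately have "card {p \<in> C \<times> ?F. fst p i \<noteq> snd p} + card {u\<in>C. u i \<notin> ?F} * card ?F
      \<le> card bad_pairs"
    by (simp add: card_cartesian_product)
  then have "int (card {p \<in> C \<times> ?F. fst p i \<noteq> snd p}) + int (card {u\<in>C. u i \<notin> ?F}) * int (card ?F)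
      \<le> int (card bad_pairs)"
    by (simp only: of_nat_add[symmetric] of_nat_mult[symmetric] of_nat_le_iff)
  then show ?thesis
    by (simp add: card_off_full_symbol_pairs card_outside_full_symbols algebra_simps)
qed

text \<open>
  As a function of the number \<open>s\<close> of non-full symbols at \<open>i\<close>, the bound of
  \<open>card_bad_pairs_ge\<close> is smallest at \<open>s = r - 1\<close>.
\<close>

lemma card_bad_pairs_ge_excess:
  assumes i: "i < n" and excess: "int r < sq_deficit i"
  shows "(int q - int r + 1) * (int q * int m * (int q + int r - 2) - 2 * int r) \<le> int (card bad_pairs)"
proof -
  define A where "A = int q * int m"
  define s where "s = int q - int (card (full_symbols i))"
  have s: "1 \<le> s" "s \<le> int r - 1"
    using full_symbols_card[OF i] excess unfolding s_def by auto
  have "0 \<le> (int r - 1 - s) * (A * (s + int r - 2) - 2 * int r)"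
  proof (cases "s = int r - 1")
    case False
    then have r_ge_3: "3 \<le> int r"
      using s by simp
    have "(int r + 1) * (int r - 1) \<le> A * (s + int r - 2)"
      using order_trans[OF r_less_q q_le_qm] s unfolding A_def by (intro mult_mono) auto
    moreover have "2 * int r \<le> (int r + 1) * (int r - 1)"
    proof -
      have "3 * int r \<le> int r * int r"
        using r_ge_3 by (intro mult_right_mono) auto
      moreover have "(int r + 1) * (int r - 1) = int r * int r - 1"
        by (simp add: algebra_simps)
      ultimately show ?thesis
        using r_ge_3 by linarith
    qed
    ultimately show ?thesis
      using s by simp
  qed simp
  also have "\<dots> = int (card (full_symbols i)) * (2 * int (card C) - A - A * int (card (full_symbols i)))
      - (int q - int r + 1) * (A * (int q + int r - 2) - 2 * int r)"
    unfolding s_def A_def card_code by (simp add: algebra_simps power2_eq_square)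
  finally show ?thesis
    using card_bad_pairs_ge[OF i] unfolding A_def by simp
qed

lemma sq_deficit_excess_exists: "\<exists>i<n. int r < sq_deficit i"
proof (rule ccontr)
  assume "\<not> (\<exists>i<n. int r < sq_deficit i)"
  then have "(\<Sum>i<n. sq_deficit i - int r) \<le> 0"
    by (intro sum_nonpos) auto
  then have no_bad: "int (card bad_pairs) \<le> 0"
    using card_bad_pairs_le_sum_excess by simp
  define A where "A = int q * int m"
  define x where "x = int (card (full_symbols 0))"
  have x: "int q - int r \<le> x" "x \<le> int q - 1"
    using full_symbols_card[OF n_pos] unfolding x_def by auto
  have "(int r + 1) * (int r + 1) \<le> int q * int q"
    using r_less_q by (intro mult_mono) auto
  also have "\<dots> \<le> int q * int q * int m"
    using m_pos by (simp add: mult_le_cancel_left1)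
  finally have "1 + 2 * int r \<le> int q * int q * int m"
    by (simp add: algebra_simps) (use zero_le_square[of "int r"] in linarith)
  moreover have "A * x \<le> A * (int q - 1)"
    using x unfolding A_def by (intro mult_left_mono) auto
  ultimately have "1 \<le> 2 * int (card C) - A - A * x"
    unfolding A_def card_code by (simp add: algebra_simps power2_eq_square)
  then have "1 * 1 \<le> x * (2 * int (card C) - A - A * x)"
    using x r_le q_ge_2 by (intro mult_mono) auto
  then show False
    using card_bad_pairs_ge[OF n_pos] no_bad unfolding A_def x_def by simp
qed

lemma parameter_inequality:
  "(int q - int r + 1) * (int q * int m * (int q + int r - 2) - 2 * int r)
     \<le> int n * (int n - 1 - int d) * (int r - 1) * int r"
proof -
  obtain i where "i < n" "int r < sq_deficit i"
    using sq_deficit_excess_exists by blast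
  then have "(int q - int r + 1) * (int q * int m * (int q + int r - 2) - 2 * int r)
      \<le> int n * (int r * (int r - 1))"
    using card_bad_pairs_ge_excess card_bad_pairs_le by fastforce
  also have "\<dots> \<le> int n * (int r * (int r - 1)) * (int n - 1 - int d)"
    using t_ge_2 r_ge_1 unfolding t_def by (simp add: mult_le_cancel_left1 mult_less_0_iff)
  finally show ?thesis
    by (simp add: algebra_simps)
qed

end

theorem theorem5p3:
  fixes q n d m r :: nat
  assumes "q \<ge> 2" and "n > 0" and "d > 0" and "m > 0"
    and "int d = int m * (int q * int d - (int q - 1) * (int n - 1))"
    and "\<not> ((int n - int d) dvd (int m * (int n - 1)))"
    and "1 \<le> r" and "r \<le> q - 1"
    and "int n * (int n - 1 - int d) * (int r - 1) * int r
           < (int q - int r + 1) * (int q * int m * (int q + int r - 2) - 2 * int r)"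
  shows "int (A_q q n d) < int q ^ 2 * int m - int r"
proof (rule ccontr)
  assume "\<not> ?thesis"
  then have large: "int q ^ 2 * int m - int r \<le> int (A_q q n d)"
    by simp
  have "r \<le> q"
    using assms(8) by simp
  also have "q \<le> q ^ 2 * m"
    using assms(1,4) by (simp add: power2_eq_square)
  finally have r_le: "r \<le> q ^ 2 * m" .
  then have "int (q ^ 2 * m - r) \<le> int (A_q q n d)"
    using large by (simp add: of_nat_diff)
  then have "q ^ 2 * m - r \<le> A_q q n d"
    by simp
  obtain C0 where C0: "C0 \<subseteq> words q n" "min_dist_ge n C0 d" "card C0 = A_q q n d"
    using A_q_attained by blast
  obtain C where C: "C \<subseteq> C0" "card C = q ^ 2 * m - r"
    using obtain_subset_with_card_n \<open>q ^ 2 * m - r \<le> A_q q n d\<close> C0(3) by metis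
  interpret large_code q n d m r C
    using assms C C0 r_le by unfold_locales (auto intro: min_dist_ge_subset simp: of_nat_diff)
  show False
    using parameter_inequality assms(9) by linarith
qed

end
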